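(* Let $\mathfrak{n}$ be a complex simple Lie algebra of type $D_n$ ($n\ge4$) and let $\mathfrak{n}=\mathfrak{n}_{-3}\oplus\cdots\oplus\mathfrak{n}_3$ be the $|3|$-grading associated to $\Sigma\in\{\Sigma_{i,1},\Sigma_{i,n},\Sigma_{1,n-1,n}\}$, where $\Sigma_{i,1}=\{\alpha_1,\alpha_i\}$, $\Sigma_{i,n}=\{\alpha_i,\alpha_n\}$ with $2\le i\le n-2$, and $\Sigma_{1,n-1,n}=\{\alpha_1,\alpha_{n-1},\alpha_n\}$. Then there is no graded isomorphism between $\mathfrak{F}_{r,3}$ and $\mathfrak{n}_{-3}\oplus\mathfrak{n}_{-2}\oplus\mathfrak{n}_{-1}$ (for any positive integer $r$).
   Context: Simple roots of $D_n$ are labeled in the standard way, with highest root $\alpha_1+2\alpha_2+\cdots+2\alpha_{n-2}+\alpha_{n-1}+\alpha_n$. For a root $\alpha=\sum a_l\alpha_l$ and a set $\Sigma$ of simple roots, $ht_\Sigma(\alpha)=\sum_{\alpha_l\in\Sigma}a_l$; the grading associated to $\Sigma$ is $\mathfrak{n}_m=\bigoplus_{ht_\Sigma(\alpha)=m}\mathfrak{g}_\alpha$ ($m\ne0$), $\mathfrak{n}_0=\mathfrak{h}\oplus\bigoplus_{ht_\Sigma(\alpha)=0}\mathfrak{g}_\alpha$, a $|3|$-grading when the highest root has $\Sigma$-height $3$. $\mathfrak{F}_{r,3}$ is the free nilpotent Lie algebra of step $3$ on $r$ generators with canonical grading $\mathfrak{f}_{-1}$ (span of generators), $\mathfrak{f}_{-2}=[\mathfrak{f}_{-1},\mathfrak{f}_{-1}]$,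 $\mathfrak{f}_{-3}=[\mathfrak{f}_{-1},\mathfrak{f}_{-2}]$; a graded isomorphism is a Lie algebra isomorphism mapping $\mathfrak{f}_{-m}$ onto $\mathfrak{n}_{-m}$ for $m=1,2,3$. *)

theory Defs
  imports Complex_Main "HOL-Library.Function_Algebras"
begin

definition csmul :: "complex \<Rightarrow> ('i \<Rightarrow> complex) \<Rightarrow> ('i \<Rightarrow> complex)" where
  "csmul c f = (\<lambda>i. c * f i)"

definition cspan :: "('i \<Rightarrow> complex) set \<Rightarrow> ('i \<Rightarrow> complex) set" where
  "cspan S = module.span csmul S"

definition comm :: "('a \<Rightarrow> 'a \<Rightarrow> 'a::ab_group_add) \<Rightarrow> 'a \<Rightarrow> 'a \<Rightarrow> 'a" where
  "comm mul x y = mul x y - mul y x"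

text \<open>(2n x 2n)-matrices are functions on index pairs, indices 0..2n-1, zero outside.\<close>
type_synonym cmat = "nat \<times> nat \<Rightarrow> complex"

definition mmul :: "nat \<Rightarrow> cmat \<Rightarrow> cmat \<Rightarrow> cmat" where
  "mmul n A B = (\<lambda>(i,j). \<Sum>k<2*n. A (i,k) * B (k,j))"

definition mtrans :: "cmat \<Rightarrow> cmat" where
  "mtrans A = (\<lambda>(i,j). A (j,i))"

definition Jform :: "nat \<Rightarrow> cmat" where
  "Jform n = (\<lambda>(i,j). if (i < n \<and> j = i + n) \<or> (j < n \<and> i = j + n) then 1 else 0)"

definition so :: "nat \<Rightarrow> cmat set" where
  "so n = {X. (\<forall>i j. (2*n \<le> i \<or> 2*n \<le> j) \<longrightarrow> X (i,j) = 0) \<and>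
              mmul n (mtrans X) (Jform n) + mmul n (Jform n) X = 0}"

definition lbr :: "nat \<Rightarrow> cmat \<Rightarrow> cmat \<Rightarrow> cmat" where
  "lbr n = comm (mmul n)"

text \<open>Cartan subalgebra: diagonal matrices in so(2n), i.e. diag(t_1..t_n,-t_1..-t_n).\<close>
definition cartan :: "nat \<Rightarrow> cmat set" where
  "cartan n = {H \<in> so n. \<forall>i j. i \<noteq> j \<longrightarrow> H (i,j) = 0}"

text \<open>Simple roots alpha_1..alpha_n (standard labelling): eps_k(H) = H(k-1,k-1);
  alpha_l = eps_l - eps_(l+1) for l \<le> n-1, alpha_n = eps_(n-1) + eps_n.\<close>
definition sroot :: "nat \<Rightarrow> nat \<Rightarrow> cmat \<Rightarrow> complex" where
  "sroot n l H = (if l < n then H (l-1,l-1) - H (l,l)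
                  else H (n-2,n-2) + H (n-1,n-1))"

definition rfun :: "nat \<Rightarrow> (nat \<Rightarrow> complex) \<Rightarrow> cmat \<Rightarrow> complex" where
  "rfun n a H = (\<Sum>l\<in>{1..n}. a l * sroot n l H)"

definition rspace :: "nat \<Rightarrow> (nat \<Rightarrow> complex) \<Rightarrow> cmat set" where
  "rspace n a = {X \<in> so n. \<forall>H \<in> cartan n. lbr n H X = csmul (rfun n a H) X}"

definition is_root :: "nat \<Rightarrow> (nat \<Rightarrow> complex) \<Rightarrow> bool" where
  "is_root n a \<longleftrightarrow> (\<forall>l. l \<notin> {1..n} \<longrightarrow> a l = 0) \<and> a \<noteq> (\<lambda>_. 0) \<and> rspace n a \<noteq> {0}"

definition ht :: "nat set \<Rightarrow> (nat \<Rightarrow> complex) \<Rightarrow> complex" where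
  "ht \<Sigma> a = (\<Sum>l\<in>\<Sigma>. a l)"

definition ngr :: "nat \<Rightarrow> nat set \<Rightarrow> int \<Rightarrow> cmat set" where
  "ngr n \<Sigma> m = cspan (\<Union> {rspace n a | a. is_root n a \<and> ht \<Sigma> a = of_int m})"

definition nneg :: "nat \<Rightarrow> nat set \<Rightarrow> cmat set" where
  "nneg n \<Sigma> = cspan (ngr n \<Sigma> (-1) \<union> ngr n \<Sigma> (-2) \<union> ngr n \<Sigma> (-3))"

text \<open>Realised as the Lie subalgebra generated by the letters x_0..x_(r-1) inside the
  free associative algebra on r letters truncated in degree \<ge> 4 (elements: functions on words).\<close>
type_synonym tens = "nat list \<Rightarrow> complex"

definition tmul :: "tens \<Rightarrow> tens \<Rightarrow> tens" where
  "tmul u v = (\<lambda>w. if length w \<le> 3 then (\<Sum>k\<le>length w. u (take k w) * v (drop k w)) else 0)"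

definition letter :: "nat \<Rightarrow> tens" where
  "letter i = (\<lambda>w. if w = [i] then 1 else 0)"

definition f1 :: "nat \<Rightarrow> tens set" where
  "f1 r = cspan {letter i | i. i < r}"

definition f2 :: "nat \<Rightarrow> tens set" where
  "f2 r = cspan {comm tmul x y | x y. x \<in> f1 r \<and> y \<in> f1 r}"

definition f3 :: "nat \<Rightarrow> tens set" where
  "f3 r = cspan {comm tmul x y | x y. x \<in> f1 r \<and> y \<in> f2 r}"

definition freeN3 :: "nat \<Rightarrow> tens set" where
  "freeN3 r = cspan (f1 r \<union> f2 r \<union> f3 r)"

definition graded_iso :: "nat \<Rightarrow> nat \<Rightarrow> nat set \<Rightarrow> (tens \<Rightarrow> cmat) \<Rightarrow> bool" where
  "graded_iso r n \<Sigma> \<phi> \<longleftrightarrow>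
     bij_betw \<phi> (freeN3 r) (nneg n \<Sigma>) \<and>
     (\<forall>x \<in> freeN3 r. \<forall>y \<in> freeN3 r. \<forall>a b.
        \<phi> (csmul a x + csmul b y) = csmul a (\<phi> x) + csmul b (\<phi> y)) \<and>
     (\<forall>x \<in> freeN3 r. \<forall>y \<in> freeN3 r. \<phi> (comm tmul x y) = lbr n (\<phi> x) (\<phi> y)) \<and>
     \<phi> ` f1 r = ngr n \<Sigma> (-1) \<and> \<phi> ` f2 r = ngr n \<Sigma> (-2) \<and> \<phi> ` f3 r = ngr n \<Sigma> (-3)"

end

theory Submission imports Defs begin

text \<open>In the free nilpotent algebra two elements of degree one commute only if they are
  proportional, because the brackets of the generators are linearly independent in degree two.
  In each of the listed gradings of \<open>so(2n)\<close>, however, some simple root \<open>\<alpha>\<^sub>p\<^sub>+\<^sub>1\<close> lies in \<open>\<Sigma>\<close>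
  while \<open>\<alpha>\<^sub>p\<^sub>+\<^sub>2\<close> does not, so the negative roots \<open>-\<alpha>\<^sub>p\<^sub>+\<^sub>1\<close> and \<open>-\<alpha>\<^sub>p\<^sub>+\<^sub>1-\<alpha>\<^sub>p\<^sub>+\<^sub>2\<close> both have
  \<open>\<Sigma>\<close>-height \<open>-1\<close>; their root vectors are independent and commute, since their sum
  \<open>\<epsilon>\<^sub>p\<^sub>+\<^sub>2+\<epsilon>\<^sub>p\<^sub>+\<^sub>3-2\<epsilon>\<^sub>p\<^sub>+\<^sub>1\<close> is not a root.\<close>

lemma module_csmul: "module (csmul :: complex \<Rightarrow> ('i \<Rightarrow> complex) \<Rightarrow> _)"
  by unfold_locales (auto simp: csmul_def algebra_simps fun_eq_iff)

lemma cspan_base: "x \<in> S \<Longrightarrow> x \<in> cspan S"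
  unfolding cspan_def by (rule module.span_base[OF module_csmul])

lemma cspan_zero: "0 \<in> cspan S"
  unfolding cspan_def by (rule module.span_zero[OF module_csmul])

lemma cspan_induct:
  assumes "x \<in> cspan S" "P 0" "\<And>c x y. x \<in> S \<Longrightarrow> P y \<Longrightarrow> P (csmul c x + y)"
  shows "P x"
  using module.span_induct_alt[OF module_csmul, of x S P] assms unfolding cspan_def by blast

lemma csmul_zero_left [simp]: "csmul 0 x = 0"
  by (simp add: csmul_def fun_eq_iff)

lemma f1_vanishes_off_length_one: "x \<in> f1 r \<Longrightarrow> length w \<noteq> 1 \<Longrightarrow> x w = 0"
  unfolding f1_def
  by (erule cspan_induct) (auto simp: csmul_def letter_def split: if_splits)

lemma comm_f1_length_two:
  assumes "x \<in> f1 r" "y \<in> f1 r"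
  shows "comm tmul x y [i, j] = x [i] * y [j] - y [i] * x [j]"
proof -
  have vanish: "x [] = 0" "x [i, j] = 0" "y [] = 0" "y [i, j] = 0"
    using f1_vanishes_off_length_one[OF assms(1)] f1_vanishes_off_length_one[OF assms(2)]
    by auto
  show ?thesis
    unfolding comm_def tmul_def by (simp add: atMost_Suc numeral_2_eq_2 vanish)
qed

lemma f1_commuting_imp_proportional:
  assumes "x \<in> f1 r" "y \<in> f1 r" "comm tmul x y = 0" "x \<noteq> 0"
  shows "\<exists>c. y = csmul c x"
proof -
  obtain w where w: "x w \<noteq> 0" using assms(4) by (auto simp: fun_eq_iff)
  then have "length w = 1" using f1_vanishes_off_length_one[OF assms(1)] by blast
  then obtain i where i: "w = [i]" by (cases w) auto
  define c where "c = y [i] / x [i]"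
  have "y v = c * x v" for v
  proof (cases "length v = 1")
    case True
    then obtain j where j: "v = [j]" by (cases v) auto
    have "x [i] * y [j] = y [i] * x [j]"
      using comm_f1_length_two[OF assms(1,2), of i j] assms(3) by simp
    then show ?thesis using w i j unfolding c_def by (simp add: field_simps)
  next
    case False
    then show ?thesis
      using f1_vanishes_off_length_one[OF assms(1)] f1_vanishes_off_length_one[OF assms(2)]
      by simp
  qed
  then show ?thesis by (auto simp: csmul_def fun_eq_iff)
qed

lemma graded_iso_commuting_degree_one_proportional:
  assumes iso: "graded_iso r n \<Sigma> \<phi>"
    and X: "X \<in> ngr n \<Sigma> (-1)" "X \<noteq> 0"
    and Y: "Y \<in> ngr n \<Sigma> (-1)"
    and XY: "lbr n X Y = 0"
  shows "\<exists>c. Y = csmul c X"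
proof -
  have bij: "bij_betw \<phi> (freeN3 r) (nneg n \<Sigma>)"
    and lin: "\<And>x y a b. x \<in> freeN3 r \<Longrightarrow> y \<in> freeN3 r \<Longrightarrow>
                \<phi> (csmul a x + csmul b y) = csmul a (\<phi> x) + csmul b (\<phi> y)"
    and hom: "\<And>x y. x \<in> freeN3 r \<Longrightarrow> y \<in> freeN3 r \<Longrightarrow> \<phi> (comm tmul x y) = lbr n (\<phi> x) (\<phi> y)"
    and deg1: "\<phi> ` f1 r = ngr n \<Sigma> (-1)"
    using iso unfolding graded_iso_def by auto
  obtain x where x: "x \<in> f1 r" "\<phi> x = X" using X(1) deg1 by (metis imageE)
  obtain y where y: "y \<in> f1 r" "\<phi> y = Y" using Y deg1 by (metis imageE)
  have f1_free: "f1 r \<subseteq> freeN3 r"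
    unfolding freeN3_def by (auto intro: cspan_base)
  have zero_free: "0 \<in> freeN3 r"
    unfolding freeN3_def by (rule cspan_zero)
  have comm_free: "comm tmul x y \<in> freeN3 r"
    unfolding freeN3_def f2_def using x y by (blast intro: cspan_base)
  have phi_zero: "\<phi> 0 = 0"
    using lin[OF zero_free zero_free, of 0 0] by simp
  have "\<phi> (comm tmul x y) = lbr n X Y"
    using hom[of x y] x y f1_free by auto
  then have "\<phi> (comm tmul x y) = \<phi> 0"
    using XY phi_zero by simp
  then have "comm tmul x y = 0"
    using bij comm_free zero_free unfolding bij_betw_def inj_on_def by blast
  moreover have "x \<noteq> 0" using x X(2) phi_zero by auto
  ultimately obtain c where "y = csmul c x"
    using f1_commuting_imp_proportional x(1) y(1) by blast
  then have "\<phi> y = csmul c (\<phi> x)"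
    using lin[of x 0 c 0] x(1) f1_free zero_free by auto
  then show ?thesis using x y by blast
qed

text \<open>\<open>E\<^sub>q\<^sub>p - E\<^sub>p\<^sub>+\<^sub>n\<^sub>,\<^sub>q\<^sub>+\<^sub>n\<close>, a root vector for \<open>\<epsilon>\<^sub>q\<^sub>+\<^sub>1 - \<epsilon>\<^sub>p\<^sub>+\<^sub>1\<close> (matrix indices start at 0).\<close>
definition root_vector :: "nat \<Rightarrow> nat \<Rightarrow> nat \<Rightarrow> cmat" where
  "root_vector n q p =
     (\<lambda>(a, b). (if a = q \<and> b = p then 1 else 0) - (if a = p + n \<and> b = q + n then 1 else 0))"

text \<open>Coefficients of \<open>-(\<alpha>\<^sub>p\<^sub>+\<^sub>1 + \<dots> + \<alpha>\<^sub>q) = \<epsilon>\<^sub>q\<^sub>+\<^sub>1 - \<epsilon>\<^sub>p\<^sub>+\<^sub>1\<close>.\<close>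
definition neg_root_coeffs :: "nat \<Rightarrow> nat \<Rightarrow> nat \<Rightarrow> complex" where
  "neg_root_coeffs p q = (\<lambda>l. if p < l \<and> l \<le> q then -1 else 0)"

lemma mmul_Jform_right:
  "mmul n A (Jform n) (a, b) = (if b < n then A (a, b + n) else if b < 2 * n then A (a, b - n) else 0)"
proof -
  have "mmul n A (Jform n) (a, b) =
      (\<Sum>k<2 * n. if k = (if b < n then b + n else b - n) \<and> b < 2 * n then A (a, k) else 0)"
    unfolding mmul_def Jform_def by (simp only: prod.case, intro sum.cong) auto
  then show ?thesis by (auto simp: sum.delta if_distrib cong: if_cong)
qed

lemma mmul_Jform_left:
  "mmul n (Jform n) A (a, b) = (if a < n then A (a + n, b) else if a < 2 * n then A (a - n, b) else 0)"
proof -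
  have "mmul n (Jform n) A (a, b) =
      (\<Sum>k<2 * n. if k = (if a < n then a + n else a - n) \<and> a < 2 * n then A (k, b) else 0)"
    unfolding mmul_def Jform_def by (simp only: prod.case, intro sum.cong) auto
  then show ?thesis by (auto simp: sum.delta if_distrib cong: if_cong)
qed

lemma root_vector_in_so: "p < n \<Longrightarrow> q < n \<Longrightarrow> root_vector n q p \<in> so n"
  unfolding so_def
  by (auto simp: fun_eq_iff mmul_Jform_right mmul_Jform_left mtrans_def root_vector_def)

lemma root_vector_nonzero: "p < n \<Longrightarrow> q < n \<Longrightarrow> root_vector n q p \<noteq> 0"
  by (auto simp: root_vector_def fun_eq_iff)

lemma cartan_diagonal_shift:
  assumes "H \<in> cartan n" "p < n"
  shows "H (p + n, p + n) = - H (p, p)"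
proof -
  have "(mmul n (mtrans H) (Jform n) + mmul n (Jform n) H) (p, p + n) = 0"
    using assms(1) by (simp add: cartan_def so_def)
  then show ?thesis
    using assms(2) by (simp add: mmul_Jform_right mmul_Jform_left mtrans_def add_eq_0_iff)
qed

lemma mmul_diagonal_left:
  assumes "\<forall>i j. i \<noteq> j \<longrightarrow> H (i, j) = 0" "\<forall>i j. 2 * n \<le> i \<or> 2 * n \<le> j \<longrightarrow> X (i, j) = 0"
  shows "mmul n H X (a, b) = H (a, a) * X (a, b)"
proof -
  have "mmul n H X (a, b) = (\<Sum>k<2 * n. if k = a then H (a, a) * X (a, b) else 0)"
    unfolding mmul_def using assms(1) by (simp only: prod.case, intro sum.cong) auto
  then show ?thesis using assms(2) by (auto simp: sum.delta)
qed

lemma mmul_diagonal_right: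
  assumes "\<forall>i j. i \<noteq> j \<longrightarrow> H (i, j) = 0" "\<forall>i j. 2 * n \<le> i \<or> 2 * n \<le> j \<longrightarrow> X (i, j) = 0"
  shows "mmul n X H (a, b) = X (a, b) * H (b, b)"
proof -
  have "mmul n X H (a, b) = (\<Sum>k<2 * n. if k = b then X (a, b) * H (b, b) else 0)"
    unfolding mmul_def using assms(1) by (simp only: prod.case, intro sum.cong) auto
  then show ?thesis using assms(2) by (auto simp: sum.delta)
qed

lemma lbr_cartan_entry:
  assumes "H \<in> cartan n" "X \<in> so n"
  shows "lbr n H X (a, b) = (H (a, a) - H (b, b)) * X (a, b)"
proof -
  have diag: "\<forall>i j. i \<noteq> j \<longrightarrow> H (i, j) = 0" using assms(1) by (simp add: cartan_def)
  have supp: "\<forall>i j. 2 * n \<le> i \<or> 2 * n \<le> j \<longrightarrow> X (i, j) = 0" using assms(2) by (simp add: so_def)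
  show ?thesis
    unfolding lbr_def comm_def
    using mmul_diagonal_left[OF diag supp] mmul_diagonal_right[OF diag supp]
    by (simp add: algebra_simps)
qed

lemma sum_sroot_telescope:
  assumes "p \<le> q" "q < n"
  shows "(\<Sum>l\<in>{p<..q}. sroot n l H) = H (p, p) - H (q, q)"
  using assms
proof (induction q rule: dec_induct)
  case base
  then show ?case by simp
next
  case (step q)
  have "{p<..Suc q} = insert (Suc q) {p<..q}" using step.hyps by auto
  then show ?case using step by (simp add: sroot_def)
qed

lemma rfun_neg_root_coeffs:
  assumes "p \<le> q" "q < n"
  shows "rfun n (neg_root_coeffs p q) H = H (q, q) - H (p, p)"
proof -
  have "rfun n (neg_root_coeffs p q) H = (\<Sum>l\<in>{1..n}. if l \<in> {p<..q} then - sroot n l H else 0)"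
    unfolding rfun_def neg_root_coeffs_def by (intro sum.cong) auto
  also have "\<dots> = (\<Sum>l\<in>{p<..q}. - sroot n l H)"
    using assms(2) by (intro sum.mono_neutral_cong_right) auto
  finally show ?thesis using sum_sroot_telescope[OF assms] by (simp add: sum_negf)
qed

lemma root_vector_in_rspace:
  assumes "p \<le> q" "q < n"
  shows "root_vector n q p \<in> rspace n (neg_root_coeffs p q)"
  unfolding rspace_def
proof (intro CollectI conjI ballI ext)
  have "p < n" using assms by simp
  show so: "root_vector n q p \<in> so n" using root_vector_in_so \<open>p < n\<close> assms(2) .
  fix H and ab :: "nat \<times> nat" assume H: "H \<in> cartan n"
  obtain a b where ab: "ab = (a, b)" by fastforce
  show "lbr n H (root_vector n q p) ab = csmul (rfun n (neg_root_coeffs p q) H) (root_vector n q p) ab"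
    using lbr_cartan_entry[OF H so, of a b] rfun_neg_root_coeffs[OF assms, of H]
      cartan_diagonal_shift[OF H \<open>p < n\<close>] cartan_diagonal_shift[OF H assms(2)]
    by (auto simp: ab root_vector_def csmul_def)
qed

lemma is_root_neg_root_coeffs:
  assumes "p < q" "q < n"
  shows "is_root n (neg_root_coeffs p q)"
  unfolding is_root_def
  using root_vector_in_rspace[of p q n] root_vector_nonzero[of p n q] assms
  by (auto simp: neg_root_coeffs_def fun_eq_iff)

lemma ht_neg_root_coeffs:
  "finite \<Sigma> \<Longrightarrow> ht \<Sigma> (neg_root_coeffs p q) = - of_nat (card (\<Sigma> \<inter> {p<..q}))"
  unfolding ht_def neg_root_coeffs_def
  by (simp add: sum.If_cases Int_def)

lemma root_vector_in_ngr:
  assumes "p < q" "q < n" "finite \<Sigma>"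
  shows "root_vector n q p \<in> ngr n \<Sigma> (- int (card (\<Sigma> \<inter> {p<..q})))"
  unfolding ngr_def
  using root_vector_in_rspace[of p q n] is_root_neg_root_coeffs[OF assms(1,2)]
    ht_neg_root_coeffs[OF assms(3), of p q] assms
  by (intro cspan_base) force

lemma lbr_root_vectors_same_column:
  assumes "p < n" "q < n" "q' < n" "q \<noteq> p" "q' \<noteq> p"
  shows "lbr n (root_vector n q p) (root_vector n q' p) = 0"
proof -
  have "mmul n (root_vector n q p) (root_vector n q' p) = 0"
    "mmul n (root_vector n q' p) (root_vector n q p) = 0"
    using assms by (auto simp: mmul_def root_vector_def fun_eq_iff intro!: sum.neutral)
  then show ?thesis by (simp add: lbr_def comm_def)
qed

theorem theorem4p8:
  fixes n r :: nat and \<Sigma> :: "nat set"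
  assumes "4 \<le> n"
    and "(\<exists>i. 2 \<le> i \<and> i \<le> n - 2 \<and> (\<Sigma> = {1, i} \<or> \<Sigma> = {i, n})) \<or> \<Sigma> = {1, n - 1, n}"
    and "0 < r"
  shows "\<not> (\<exists>\<phi>. graded_iso r n \<Sigma> \<phi>)"
proof
  assume "\<exists>\<phi>. graded_iso r n \<Sigma> \<phi>"
  then obtain \<phi> where iso: "graded_iso r n \<Sigma> \<phi>" ..
  have fin: "finite \<Sigma>" using assms(2) by auto
  obtain p where p: "p + 2 < n" "\<Sigma> \<inter> {p<..p + 1} = {p + 1}" "\<Sigma> \<inter> {p<..p + 2} = {p + 1}"
  proof -
    from assms(2) consider i where "2 \<le> i" "i \<le> n - 2" "\<Sigma> = {1, i} \<or> \<Sigma> = {i, n}"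
      | "\<Sigma> = {1, n - 1, n}" by blast
    then show ?thesis
    proof cases
      case 1
      then show ?thesis using assms(1) by (intro that[of "i - 1"]) auto
    next
      case 2
      then show ?thesis using assms(1) by (intro that[of 0]) auto
    qed
  qed
  define X where "X = root_vector n (p + 1) p"
  define Y where "Y = root_vector n (p + 2) p"
  have "X \<in> ngr n \<Sigma> (-1)" "Y \<in> ngr n \<Sigma> (-1)"
    using root_vector_in_ngr[OF _ _ fin, of p "p + 1" n] root_vector_in_ngr[OF _ _ fin, of p "p + 2" n] p
    by (simp_all add: X_def Y_def)
  moreover have "lbr n X Y = 0" "X \<noteq> 0"
    using lbr_root_vectors_same_column root_vector_nonzero p(1) by (simp_all add: X_def Y_def)
  ultimately obtain c where "Y = csmul c X"
    using graded_iso_commuting_degree_one_proportional[OF iso] by blast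
  then have "Y (p + 2, p) = c * X (p + 2, p)" by (simp add: csmul_def)
  then show False by (simp add: X_def Y_def root_vector_def)
qed

end
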